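(* Let $X$ be a finite topological space and $A\subseteq X$. Then $rad_X(A)\le rad_X(A^\circ)$ and $rad_X(A)\le rad_X(\overline{A})$, where $A^\circ$ and $\overline{A}$ are the interior and closure of $A$ in $X$.
   Context: For a finite topological space $X$ and $x\in X$, $U_x$ denotes the minimal open set containing $x$. A nested sequence of open sets around $x$ is a finite sequence $U_0\subsetneq U_1\subsetneq\cdots\subsetneq U_m=X$ of open sets with $U_0=U_x$ such that for each $j$ there is no open set $V$ with $U_j\subsetneq V\subsetneq U_{j+1}$. The furtherness function $\Psi:X\times X\to\{0,1,\dots,|X|-1\}$ is defined by: $\Psi(x,y)$ is the smallest integer $k\ge 0$ such that there exists a nested sequence $(U_j)_{j\ge0}$ of open sets around $x$ with $y\in U_k$. For $a\in X$ and $B\subseteq X$, $\Psi(a,B)=\min_{b\in B}\Psi(a,b)$, and for $A,B\subseteq X$, $\Psi(A,B)=\min_{a\in A}\Psi(a,B)$, with the value $\infty$ (larger than every integer) if $A$ or $B$ is empty. $\partial_X(A)$ denotes the boundary of $A$ in $X$. The center of $A$ is $Cent_X(A)=\{a\in A\mid \Psi(a,\partial_X(A))\ge\Psi(b,\partial_X(A))\ \forall b\in A\}$, and the radius is $rad_X(A)=\Psi(Cent_X(A),\partial_X(A))$. *)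

theory Defs
  imports "HOL-Analysis.Analysis" "HOL-Library.Extended_Nat"
begin

definition minimal_open :: "'a topology \<Rightarrow> 'a \<Rightarrow> 'a set" where
  "minimal_open X x = \<Inter>{U. openin X U \<and> x \<in> U}"

definition nested_seq :: "'a topology \<Rightarrow> 'a \<Rightarrow> (nat \<Rightarrow> 'a set) \<Rightarrow> nat \<Rightarrow> bool" where
  "nested_seq X x U m \<longleftrightarrow>
     U 0 = minimal_open X x \<and> U m = topspace X \<and>
     (\<forall>j\<le>m. openin X (U j)) \<and>
     (\<forall>j<m. U j \<subset> U (Suc j) \<and> \<not> (\<exists>V. openin X V \<and> U j \<subset> V \<and> V \<subset> U (Suc j)))"

definition furtherness :: "'a topology \<Rightarrow> 'a \<Rightarrow> 'a \<Rightarrow> nat" where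
  "furtherness X x y = (LEAST k. \<exists>U m. nested_seq X x U m \<and> k \<le> m \<and> y \<in> U k)"

text \<open>Psi(a,B); infinity (top of enat) if B is empty.\<close>
definition psi_pt_set :: "'a topology \<Rightarrow> 'a \<Rightarrow> 'a set \<Rightarrow> enat" where
  "psi_pt_set X a B = (INF b\<in>B. enat (furtherness X a b))"

text \<open>Psi(A,B); infinity if A or B is empty.\<close>
definition psi_sets :: "'a topology \<Rightarrow> 'a set \<Rightarrow> 'a set \<Rightarrow> enat" where
  "psi_sets X A B = (INF a\<in>A. psi_pt_set X a B)"

definition center :: "'a topology \<Rightarrow> 'a set \<Rightarrow> 'a set" where
  "center X A = {a \<in> A. \<forall>b\<in>A. psi_pt_set X b (X frontier_of A) \<le> psi_pt_set X a (X frontier_of A)}"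

definition radius :: "'a topology \<Rightarrow> 'a set \<Rightarrow> enat" where
  "radius X A = psi_sets X (center X A) (X frontier_of A)"

end

theory Submission
  imports Defs
begin

text \<open>In a finite space every point has a nested sequence of open sets, and it starts with
  \<open>U\<^sub>x \<ni> x\<close>, so \<open>\<Psi>(x,x) = 0\<close>. For finite nonempty \<open>A\<close> the radius is the largest value of
  \<open>\<Psi>(a,\<partial>A)\<close> over \<open>a \<in> A\<close>. If \<open>B\<close> is the interior or the closure of \<open>A\<close>, then
  \<open>\<partial>B \<subseteq> \<partial>A\<close> and every point of \<open>A\<close> outside \<open>B\<close> lies on \<open>\<partial>A\<close>: such points contribute \<open>0\<close>,
  and for \<open>a \<in> A \<inter> B\<close> we get \<open>\<Psi>(a,\<partial>A) \<le> \<Psi>(a,\<partial>B) \<le> rad(B)\<close>.\<close>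

definition saturated_open_chain :: "'a topology \<Rightarrow> (nat \<Rightarrow> 'a set) \<Rightarrow> nat \<Rightarrow> bool" where
  "saturated_open_chain X U m \<longleftrightarrow>
     U m = topspace X \<and> (\<forall>j\<le>m. openin X (U j)) \<and>
     (\<forall>j<m. U j \<subset> U (Suc j) \<and> \<not> (\<exists>V. openin X V \<and> U j \<subset> V \<and> V \<subset> U (Suc j)))"

lemma nested_seq_iff_saturated_open_chain:
  "nested_seq X x U m \<longleftrightarrow> U 0 = minimal_open X x \<and> saturated_open_chain X U m"
  by (auto simp: nested_seq_def saturated_open_chain_def)

lemma finite_openin:
  assumes "finite (topspace X)"
  shows "finite {U. openin X U}"
proof (rule finite_subset)
  show "{U. openin X U} \<subseteq> Pow (topspace X)"
    by (auto dest: openin_subset)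
qed (use assms in simp)

lemma exists_open_cover:
  assumes "finite (topspace X)" "openin X U" "U \<noteq> topspace X"
  obtains V where "openin X V" "U \<subset> V" "\<not> (\<exists>W. openin X W \<and> U \<subset> W \<and> W \<subset> V)"
proof -
  let ?S = "{V. openin X V \<and> U \<subset> V}"
  have "finite ?S"
    using finite_openin[OF assms(1)] by (rule rev_finite_subset) blast
  moreover have "topspace X \<in> ?S"
    using openin_subset[OF assms(2)] assms(3) by (simp add: psubset_eq)
  ultimately have "\<exists>V\<in>?S. V \<le> topspace X \<and> (\<forall>W\<in>?S. W \<le> V \<longrightarrow> V = W)"
    by (rule finite_has_minimal2)
  then obtain V where "V \<in> ?S" and min: "\<forall>W\<in>?S. W \<le> V \<longrightarrow> V = W"
    by (elim bexE conjE)
  show thesis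
  proof (rule that)
    show "openin X V" "U \<subset> V"
      using \<open>V \<in> ?S\<close> by simp_all
    show "\<not> (\<exists>W. openin X W \<and> U \<subset> W \<and> W \<subset> V)"
    proof
      assume "\<exists>W. openin X W \<and> U \<subset> W \<and> W \<subset> V"
      then obtain W where "W \<in> ?S" "W \<subset> V"
        by blast
      with min show False
        by blast
    qed
  qed
qed

lemma saturated_open_chain_Cons:
  assumes "saturated_open_chain X V m" "openin X U" "U \<subset> V 0"
    "\<not> (\<exists>W. openin X W \<and> U \<subset> W \<and> W \<subset> V 0)"
  shows "saturated_open_chain X (case_nat U V) (Suc m)"
  unfolding saturated_open_chain_def
proof (intro conjI allI impI)
  show "case_nat U V (Suc m) = topspace X"
    using assms(1) by (simp add: saturated_open_chain_def)
next
  fix j assume "j \<le> Suc m"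
  then show "openin X (case_nat U V j)"
    using assms(1,2) by (cases j) (simp_all add: saturated_open_chain_def)
next
  fix j assume "j < Suc m"
  then show "case_nat U V j \<subset> case_nat U V (Suc j)"
    and "\<not> (\<exists>W. openin X W \<and> case_nat U V j \<subset> W \<and> W \<subset> case_nat U V (Suc j))"
    using assms(1,3,4) by (cases j; simp add: saturated_open_chain_def)+
qed

lemma saturated_open_chain_exists:
  assumes "finite (topspace X)" "openin X U"
  shows "\<exists>V m. V 0 = U \<and> saturated_open_chain X V m"
  using assms(2)
proof (induction "card (topspace X - U)" arbitrary: U rule: less_induct)
  case less
  show ?case
  proof (cases "U = topspace X")
    case True
    then have "saturated_open_chain X (\<lambda>_. U) 0"
      using less.prems by (simp add: saturated_open_chain_def)
    then show ?thesis by (intro exI[of _ "\<lambda>_. U"] exI[of _ 0]) simp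
  next
    case False
    obtain W where W: "openin X W" "U \<subset> W" "\<not> (\<exists>W'. openin X W' \<and> U \<subset> W' \<and> W' \<subset> W)"
      by (rule exists_open_cover[OF assms(1) less.prems False])
    have "topspace X - W \<subset> topspace X - U"
      using openin_subset[OF W(1)] W(2) by blast
    then have "card (topspace X - W) < card (topspace X - U)"
      using assms(1) by (intro psubset_card_mono) simp_all
    then obtain V m where "V 0 = W" "saturated_open_chain X V m"
      using less.hyps[OF _ W(1)] by blast
    then have "saturated_open_chain X (case_nat U V) (Suc m)"
      using saturated_open_chain_Cons[of X V m U] W less.prems by simp
    then show ?thesis
      by (intro exI[of _ "case_nat U V"] exI[of _ "Suc m"]) simp
  qed
qed

lemma mem_minimal_open: "x \<in> minimal_open X x"
  by (simp add: minimal_open_def)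

lemma openin_minimal_open:
  assumes "finite (topspace X)" "x \<in> topspace X"
  shows "openin X (minimal_open X x)"
  unfolding minimal_open_def
proof (rule openin_Inter)
  show "finite {U. openin X U \<and> x \<in> U}"
    using finite_openin[OF assms(1)] by (rule rev_finite_subset) blast
qed (use assms(2) in auto)

lemma nested_seq_exists:
  assumes "finite (topspace X)" "x \<in> topspace X"
  shows "\<exists>U m. nested_seq X x U m"
  using saturated_open_chain_exists[OF assms(1) openin_minimal_open[OF assms]]
  by (auto simp: nested_seq_iff_saturated_open_chain)

lemma furtherness_self:
  assumes "finite (topspace X)" "x \<in> topspace X"
  shows "furtherness X x x = 0"
proof -
  obtain U m where "nested_seq X x U m"
    using nested_seq_exists[OF assms] by blast
  then have "x \<in> U 0"
    by (simp add: nested_seq_def mem_minimal_open)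
  with \<open>nested_seq X x U m\<close> show ?thesis
    unfolding furtherness_def by (intro Least_eq_0) blast
qed

lemma psi_pt_set_eq_0:
  assumes "finite (topspace X)" "x \<in> topspace X" "x \<in> B"
  shows "psi_pt_set X x B = 0"
proof -
  have "psi_pt_set X x B \<le> enat (furtherness X x x)"
    unfolding psi_pt_set_def using assms(3) by (rule INF_lower)
  with furtherness_self[OF assms(1,2)] show ?thesis
    by (metis le_zero_eq zero_enat_def)
qed

lemma psi_pt_set_antimono: "B \<subseteq> C \<Longrightarrow> psi_pt_set X a C \<le> psi_pt_set X a B"
  unfolding psi_pt_set_def by (rule INF_superset_mono) auto

lemma radius_eq_Max:
  assumes "finite A" "A \<noteq> {}"
  shows "radius X A = (MAX a\<in>A. psi_pt_set X a (X frontier_of A))"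
proof -
  define g where "g a = psi_pt_set X a (X frontier_of A)" for a
  let ?M = "MAX a\<in>A. g a"
  have "center X A = {a\<in>A. ?M = g a}"
    using assms by (auto simp: center_def g_def[symmetric] Max_eq_iff)
  moreover have "?M \<in> g ` A"
    using assms by (intro Max_in) auto
  ultimately have "radius X A = (INF a\<in>{a\<in>A. ?M = g a}. ?M)"
    unfolding radius_def psi_sets_def g_def[symmetric] by (intro INF_cong) auto
  also have "\<dots> = ?M"
    using \<open>?M \<in> g ` A\<close> by (intro INF_const) auto
  finally show ?thesis by (simp add: g_def)
qed

lemma radius_le_radius_if_frontier_subset:
  assumes "finite (topspace X)" "A \<subseteq> topspace X" "B \<subseteq> topspace X" "A \<noteq> {}"
    and frontier: "X frontier_of B \<subseteq> X frontier_of A"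
    and cover: "A \<subseteq> B \<union> X frontier_of A"
  shows "radius X A \<le> radius X B"
proof -
  have fin: "finite A" "finite B"
    using assms(1-3) finite_subset by auto
  have "psi_pt_set X a (X frontier_of A) \<le> radius X B" if "a \<in> A" for a
  proof (cases "a \<in> X frontier_of A")
    case True
    then show ?thesis
      using psi_pt_set_eq_0 assms(1) frontier_of_subset_topspace by fastforce
  next
    case False
    with cover \<open>a \<in> A\<close> have "a \<in> B" by blast
    have "psi_pt_set X a (X frontier_of A) \<le> psi_pt_set X a (X frontier_of B)"
      using frontier by (rule psi_pt_set_antimono)
    also have "\<dots> \<le> radius X B"
      using \<open>a \<in> B\<close> fin(2) by (subst radius_eq_Max) auto
    finally show ?thesis .
  qed
  then show ?thesis
    using fin(1) assms(4) by (simp add: radius_eq_Max)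
qed

lemma frontier_of_interior_of_subset: "X frontier_of (X interior_of A) \<subseteq> X frontier_of A"
  using closure_of_mono[OF interior_of_subset[of X A]] by (auto simp: frontier_of_def)

lemma frontier_of_closure_of_subset: "X frontier_of (X closure_of A) \<subseteq> X frontier_of A"
proof -
  have "X interior_of A \<subseteq> X interior_of (X closure_of A)"
    by (intro interior_of_maximal interior_of_subset_closure_of openin_interior_of)
  then show ?thesis
    by (auto simp: frontier_of_def)
qed

theorem mainTheorem20:
  fixes X :: "'a topology" and A :: "'a set"
  assumes "finite (topspace X)" and "A \<subseteq> topspace X"
  shows "radius X A \<le> radius X (X interior_of A) \<and> radius X A \<le> radius X (X closure_of A)"
proof (cases "A = {}")
  case False
  have "A \<subseteq> X closure_of A"
    using assms(2) by (rule closure_of_subset)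
  then have "A \<subseteq> X interior_of A \<union> X frontier_of A" "A \<subseteq> X closure_of A \<union> X frontier_of A"
    by auto
  then show ?thesis
    using radius_le_radius_if_frontier_subset[OF assms interior_of_subset_topspace False
        frontier_of_interior_of_subset]
      radius_le_radius_if_frontier_subset[OF assms closure_of_subset_topspace False
        frontier_of_closure_of_subset]
    by blast
qed simp

end
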